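(* Let $\Omega\subset\mathbb{R}^N$ be a smooth open bounded domain, let $a,b,c\in L^\infty(\Omega)$ with $\operatorname{ess\,inf}_\Omega a>0$, $\operatorname{ess\,inf}_\Omega b>0$, $\operatorname{ess\,inf}_\Omega c>0$, and let $F\in C^1(\mathbb{R}^2,\mathbb{R})$ satisfy: (F$_+$) $F(s,t)\ge 0$ for all $(s,t)\in\mathbb{R}^2$, $F(0,0)=0$, and $F\not\equiv 0$; (F$_0$) $\lim_{(s,t)\to(0,0)}\frac{F_s(s,t)}{|s|+|t|}=\lim_{(s,t)\to(0,0)}\frac{F_t(s,t)}{|s|+|t|}=0$; (F$_\infty$) $\lim_{|s|+|t|\to\infty}\frac{F_s(s,t)}{|s|+|t|}=\lim_{|s|+|t|\to\infty}\frac{F_t(s,t)}{|s|+|t|}=0$. Define $$s_F=2\|c\|_{L^1}\sup_{(s,t)\neq(0,0)}\frac{F(s,t)}{\|a\|_{L^1}s^2+\|b\|_{L^1}t^2},\qquad S_F=\sup_{(s,t)\neq(0,0)}\frac{|sF_s(s,t)+tF_t(s,t)|}{\|c/a\|_{L^\infty}^{-1}s^2+\|c/b\|_{L^\infty}^{-1}t^2}.$$ Then $s_F$ and $S_F$ are finite and positive, and $S_F\ge s_F$.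
   Context: $F_s,F_t$ denote the partial derivatives of $F$ with respect to its first and second variables; $\|\cdot\|_{L^p}$ is the norm of $L^p(\Omega)$. *)

theory Defs
  imports "HOL-Analysis.Analysis" "HOL-Probability.Essential_Supremum"
begin

definition essinf_on :: "'a::euclidean_space set \<Rightarrow> ('a \<Rightarrow> real) \<Rightarrow> ereal" where
  "essinf_on \<Omega> f = - esssup (restrict_space lebesgue \<Omega>) (\<lambda>x. ereal (- f x))"

definition in_Linf :: "'a::euclidean_space set \<Rightarrow> ('a \<Rightarrow> real) \<Rightarrow> bool" where
  "in_Linf \<Omega> f \<longleftrightarrow> f \<in> borel_measurable (restrict_space lebesgue \<Omega>) \<and>
     esssup (restrict_space lebesgue \<Omega>) (\<lambda>x. ereal \<bar>f x\<bar>) < \<infinity>"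

definition Linf_norm :: "'a::euclidean_space set \<Rightarrow> ('a \<Rightarrow> real) \<Rightarrow> real" where
  "Linf_norm \<Omega> f = real_of_ereal (esssup (restrict_space lebesgue \<Omega>) (\<lambda>x. ereal \<bar>f x\<bar>))"

definition L1_norm :: "'a::euclidean_space set \<Rightarrow> ('a \<Rightarrow> real) \<Rightarrow> real" where
  "L1_norm \<Omega> f = (LINT x:\<Omega>|lebesgue. \<bar>f x\<bar>)"

text \<open>The quantities s_F and S_F (as extended reals, so that finiteness is meaningful).\<close>
definition sF :: "'a::euclidean_space set \<Rightarrow> ('a \<Rightarrow> real) \<Rightarrow> ('a \<Rightarrow> real) \<Rightarrow> ('a \<Rightarrow> real)
    \<Rightarrow> (real \<Rightarrow> real \<Rightarrow> real) \<Rightarrow> ereal" where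
  "sF \<Omega> a b c F = 2 * ereal (L1_norm \<Omega> c) *
     (SUP p \<in> UNIV - {(0,0)}. ereal (F (fst p) (snd p) /
        (L1_norm \<Omega> a * (fst p)\<^sup>2 + L1_norm \<Omega> b * (snd p)\<^sup>2)))"

definition SF :: "'a::euclidean_space set \<Rightarrow> ('a \<Rightarrow> real) \<Rightarrow> ('a \<Rightarrow> real) \<Rightarrow> ('a \<Rightarrow> real)
    \<Rightarrow> (real \<Rightarrow> real \<Rightarrow> real) \<Rightarrow> (real \<Rightarrow> real \<Rightarrow> real) \<Rightarrow> ereal" where
  "SF \<Omega> a b c Fs Ft =
     (SUP p \<in> UNIV - {(0,0)}. ereal (\<bar>fst p * Fs (fst p) (snd p) + snd p * Ft (fst p) (snd p)\<bar> /
        (inverse (Linf_norm \<Omega> (\<lambda>x. c x / a x)) * (fst p)\<^sup>2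
         + inverse (Linf_norm \<Omega> (\<lambda>x. c x / b x)) * (snd p)\<^sup>2)))"

end

theory Submission
  imports Defs
begin

(*
  Let q(s,t) = s^2/alpha + t^2/beta with alpha = |c/a|_inf and beta = |c/b|_inf. By (F_0), (F_inf)
  and continuity, |F_s|, |F_t| <= K (|s| + |t|), so |s F_s + t F_t| <= 2K (s^2 + t^2) and S_F is
  finite. Along each ray, r |-> F(rs, rt) - S_F r^2 q(s,t) / 2 has nonpositive derivative, whence
  F <= S_F q / 2. Since |c|_1 <= alpha |a|_1 and |c|_1 <= beta |b|_1, this gives
  2 |c|_1 F(s,t) <= S_F (|a|_1 s^2 + |b|_1 t^2), i.e. s_F <= S_F. Finally s_F > 0 because F >= 0
  does not vanish identically.
*)

lemma open_bounded_emeasure_lebesgue: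
  fixes \<Omega> :: "'a::euclidean_space set"
  assumes "open \<Omega>" "bounded \<Omega>" "\<Omega> \<noteq> {}"
  shows "0 < emeasure lebesgue \<Omega>" and "emeasure lebesgue \<Omega> < \<infinity>"
proof -
  have eq: "emeasure lebesgue \<Omega> = emeasure lborel \<Omega>"
    using assms(1) by (simp add: emeasure_completion)
  show "emeasure lebesgue \<Omega> < \<infinity>"
    using eq emeasure_bounded_finite[OF assms(2)] by (simp add: less_top)
  obtain x r where "r > 0" "ball x r \<subseteq> \<Omega>"
    using assms(1,3) open_contains_ball by blast
  then have "0 < emeasure lborel (ball x r)" "emeasure lborel (ball x r) \<le> emeasure lborel \<Omega>"
    using assms(1) by (simp add: emeasure_ball, intro emeasure_mono) simp_all
  then show "0 < emeasure lebesgue \<Omega>" using eq by simp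
qed

lemma essinf_on_pos_imp_AE_ge:
  assumes "essinf_on \<Omega> f > 0"
  obtains m where "m > 0" "AE x in restrict_space lebesgue \<Omega>. f x \<ge> m"
proof -
  let ?e = "esssup (restrict_space lebesgue \<Omega>) (\<lambda>x. ereal (- f x))"
  have "?e < 0" using assms unfolding essinf_on_def by (cases ?e) auto
  then obtain r where r: "?e < ereal r" "ereal r < 0" using ereal_dense2 by blast
  have "AE x in restrict_space lebesgue \<Omega>. f x \<ge> - r"
    using esssup_AE[of "\<lambda>x. ereal (- f x)" "restrict_space lebesgue \<Omega>"]
  proof eventually_elim
    case (elim x)
    then have "ereal (- f x) < ereal r" using r(1) by (rule le_less_trans)
    then show ?case by simp
  qed
  with r(2) show ?thesis by (intro that[of "- r"]) auto
qed

lemma in_Linf_imp_AE_abs_le: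
  assumes "in_Linf \<Omega> f"
  obtains K where "AE x in restrict_space lebesgue \<Omega>. \<bar>f x\<bar> \<le> K"
proof -
  let ?e = "esssup (restrict_space lebesgue \<Omega>) (\<lambda>x. ereal \<bar>f x\<bar>)"
  obtain r where r: "?e < ereal r"
    using assms ereal_dense2 unfolding in_Linf_def by blast
  have "AE x in restrict_space lebesgue \<Omega>. \<bar>f x\<bar> \<le> r"
    using esssup_AE[of "\<lambda>x. ereal \<bar>f x\<bar>" "restrict_space lebesgue \<Omega>"]
  proof eventually_elim
    case (elim x)
    then have "ereal \<bar>f x\<bar> < ereal r" using r by (rule le_less_trans)
    then show ?case by simp
  qed
  then show ?thesis by (rule that)
qed

lemma in_Linf_divide:
  assumes "in_Linf \<Omega> c" "in_Linf \<Omega> a" "essinf_on \<Omega> a > 0"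
  shows "in_Linf \<Omega> (\<lambda>x. c x / a x)"
proof -
  let ?M = "restrict_space lebesgue \<Omega>"
  obtain m where m: "m > 0" "AE x in ?M. a x \<ge> m"
    using essinf_on_pos_imp_AE_ge[OF assms(3)] by blast
  obtain K where K: "AE x in ?M. \<bar>c x\<bar> \<le> K"
    using in_Linf_imp_AE_abs_le[OF assms(1)] by blast
  have [measurable]: "a \<in> borel_measurable ?M" "c \<in> borel_measurable ?M"
    using assms(1,2) unfolding in_Linf_def by auto
  have bound: "AE x in ?M. ereal \<bar>c x / a x\<bar> \<le> ereal (K / m)"
    using m(2) K
  proof eventually_elim
    case (elim x)
    then have "\<bar>c x\<bar> / a x \<le> K / m"
      using m(1) by (intro frac_le) auto
    then show ?case using elim m(1) by (simp add: abs_divide)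
  qed
  have "esssup ?M (\<lambda>x. ereal \<bar>c x / a x\<bar>) \<le> ereal (K / m)"
    by (rule esssup_I[OF _ bound]) measurable
  then show ?thesis unfolding in_Linf_def by (auto simp: le_less_trans)
qed

context
  fixes \<Omega> :: "'a::euclidean_space set"
  assumes \<Omega>_sets: "\<Omega> \<in> sets lebesgue"
    and \<Omega>_pos: "0 < emeasure lebesgue \<Omega>"
    and \<Omega>_finite: "emeasure lebesgue \<Omega> < \<infinity>"
begin

lemma emeasure_restrict_lebesgue_space:
  "emeasure (restrict_space lebesgue \<Omega>) (space (restrict_space lebesgue \<Omega>)) = emeasure lebesgue \<Omega>"
  using \<Omega>_sets by (simp add: space_restrict_space emeasure_restrict_space)

lemma finite_measure_restrict_lebesgue: "finite_measure (restrict_space lebesgue \<Omega>)"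
  using emeasure_restrict_lebesgue_space \<Omega>_finite by (intro finite_measureI) simp

lemma not_AE_False_restrict_lebesgue: "\<not> (AE x in restrict_space lebesgue \<Omega>. False)"
  using emeasure_restrict_lebesgue_space \<Omega>_pos
  by (simp add: eventually_False ae_filter_eq_bot_iff)

lemma L1_norm_eq_integral: "L1_norm \<Omega> f = (\<integral>x. \<bar>f x\<bar> \<partial>restrict_space lebesgue \<Omega>)"
  unfolding L1_norm_def set_lebesgue_integral_def
  using \<Omega>_sets by (simp add: integral_restrict_space)

lemma integrable_abs_if_in_Linf:
  assumes "in_Linf \<Omega> f"
  shows "integrable (restrict_space lebesgue \<Omega>) (\<lambda>x. \<bar>f x\<bar>)"
proof -
  interpret finite_measure "restrict_space lebesgue \<Omega>"
    by (rule finite_measure_restrict_lebesgue)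
  obtain K where "AE x in restrict_space lebesgue \<Omega>. \<bar>f x\<bar> \<le> K"
    using in_Linf_imp_AE_abs_le[OF assms] by blast
  moreover have [measurable]: "f \<in> borel_measurable (restrict_space lebesgue \<Omega>)"
    using assms unfolding in_Linf_def by simp
  ultimately show ?thesis by (intro integrable_const_bound[where B=K]) auto
qed

lemma AE_abs_le_Linf_norm:
  assumes "in_Linf \<Omega> f"
  shows "AE x in restrict_space lebesgue \<Omega>. \<bar>f x\<bar> \<le> Linf_norm \<Omega> f"
proof -
  let ?e = "esssup (restrict_space lebesgue \<Omega>) (\<lambda>x. ereal \<bar>f x\<bar>)"
  have AE: "AE x in restrict_space lebesgue \<Omega>. ereal \<bar>f x\<bar> \<le> ?e" by (rule esssup_AE)
  have "?e \<noteq> - \<infinity>"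
    using AE not_AE_False_restrict_lebesgue by (auto elim: eventually_mono)
  moreover have "?e < \<infinity>" using assms unfolding in_Linf_def by blast
  ultimately have "?e = ereal (Linf_norm \<Omega> f)"
    unfolding Linf_norm_def by (cases ?e) auto
  then show ?thesis using AE by simp
qed

lemma L1_norm_pos:
  assumes "in_Linf \<Omega> f" "essinf_on \<Omega> f > 0"
  shows "L1_norm \<Omega> f > 0"
proof -
  let ?M = "restrict_space lebesgue \<Omega>"
  obtain m where m: "m > 0" "AE x in ?M. f x \<ge> m"
    using essinf_on_pos_imp_AE_ge[OF assms(2)] by blast
  have "(\<integral>x. \<bar>f x\<bar> \<partial>?M) \<noteq> 0"
  proof
    assume "(\<integral>x. \<bar>f x\<bar> \<partial>?M) = 0"
    then have "AE x in ?M. \<bar>f x\<bar> = 0"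
      using integral_nonneg_eq_0_iff_AE[OF integrable_abs_if_in_Linf[OF assms(1)]] by simp
    with m(2) have "AE x in ?M. False" by eventually_elim (use m(1) in simp)
    with not_AE_False_restrict_lebesgue show False ..
  qed
  moreover have "(\<integral>x. \<bar>f x\<bar> \<partial>?M) \<ge> 0" by simp
  ultimately show ?thesis unfolding L1_norm_eq_integral by linarith
qed

lemma L1_norm_le_Linf_norm_divide_mult:
  assumes "in_Linf \<Omega> c" "in_Linf \<Omega> a" "essinf_on \<Omega> a > 0"
  shows "L1_norm \<Omega> c \<le> Linf_norm \<Omega> (\<lambda>x. c x / a x) * L1_norm \<Omega> a"
proof -
  let ?M = "restrict_space lebesgue \<Omega>" and ?\<alpha> = "Linf_norm \<Omega> (\<lambda>x. c x / a x)"
  obtain m where m: "m > 0" "AE x in ?M. a x \<ge> m"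
    using essinf_on_pos_imp_AE_ge[OF assms(3)] by blast
  have "AE x in ?M. \<bar>c x\<bar> \<le> ?\<alpha> * \<bar>a x\<bar>"
    using AE_abs_le_Linf_norm[OF in_Linf_divide[OF assms]] m(2)
    by eventually_elim (use m(1) in \<open>auto simp: abs_divide pos_divide_le_eq\<close>)
  then have "(\<integral>x. \<bar>c x\<bar> \<partial>?M) \<le> (\<integral>x. ?\<alpha> * \<bar>a x\<bar> \<partial>?M)"
    using assms by (intro integral_mono_AE integrable_mult_right integrable_abs_if_in_Linf)
  then show ?thesis unfolding L1_norm_eq_integral by simp
qed

lemma inverse_Linf_norm_divide:
  assumes "in_Linf \<Omega> c" "in_Linf \<Omega> a" "essinf_on \<Omega> c > 0" "essinf_on \<Omega> a > 0"
  shows "inverse (Linf_norm \<Omega> (\<lambda>x. c x / a x)) > 0"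
    and "L1_norm \<Omega> c * inverse (Linf_norm \<Omega> (\<lambda>x. c x / a x)) \<le> L1_norm \<Omega> a"
proof -
  have le: "L1_norm \<Omega> c \<le> Linf_norm \<Omega> (\<lambda>x. c x / a x) * L1_norm \<Omega> a"
    using L1_norm_le_Linf_norm_divide_mult[OF assms(1,2,4)] .
  moreover have "L1_norm \<Omega> c > 0" and a_pos: "L1_norm \<Omega> a > 0"
    using L1_norm_pos assms by simp_all
  ultimately have "0 < Linf_norm \<Omega> (\<lambda>x. c x / a x) * L1_norm \<Omega> a" by linarith
  with a_pos have "Linf_norm \<Omega> (\<lambda>x. c x / a x) > 0" by (simp add: zero_less_mult_iff)
  with le show "inverse (Linf_norm \<Omega> (\<lambda>x. c x / a x)) > 0"
    "L1_norm \<Omega> c * inverse (Linf_norm \<Omega> (\<lambda>x. c x / a x)) \<le> L1_norm \<Omega> a"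
    by (simp_all add: field_simps)
qed

end

(* Both s_F / (2 |c|_1) and S_F are suprema of this shape. *)

definition quadratic_quotient_sup :: "(real \<Rightarrow> real \<Rightarrow> real) \<Rightarrow> real \<Rightarrow> real \<Rightarrow> ereal" where
  "quadratic_quotient_sup G A B =
     (SUP p \<in> UNIV - {(0,0)}. ereal (G (fst p) (snd p) / (A * (fst p)\<^sup>2 + B * (snd p)\<^sup>2)))"

lemma quadratic_form_pos:
  fixes A B s t :: real
  assumes "(s, t) \<noteq> (0, 0)" "A > 0" "B > 0"
  shows "A * s\<^sup>2 + B * t\<^sup>2 > 0"
  using assms by (cases "s = 0") (auto intro: add_pos_nonneg)

lemma quadratic_quotient_sup_upper:
  assumes "(s, t) \<noteq> (0, 0)"
  shows "ereal (G s t / (A * s\<^sup>2 + B * t\<^sup>2)) \<le> quadratic_quotient_sup G A B"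
  unfolding quadratic_quotient_sup_def using assms
  by (intro SUP_upper2[of "(s, t)"]) auto

lemma quadratic_quotient_sup_le_iff:
  assumes "A > 0" "B > 0"
  shows "quadratic_quotient_sup G A B \<le> ereal L \<longleftrightarrow>
    (\<forall>s t. (s, t) \<noteq> (0, 0) \<longrightarrow> G s t \<le> L * (A * s\<^sup>2 + B * t\<^sup>2))"
proof -
  have pointwise: "G s t / (A * s\<^sup>2 + B * t\<^sup>2) \<le> L \<longleftrightarrow> G s t \<le> L * (A * s\<^sup>2 + B * t\<^sup>2)"
    if "(s, t) \<noteq> (0, 0)" for s t
    using quadratic_form_pos[OF that assms] by (simp add: pos_divide_le_eq)
  have "quadratic_quotient_sup G A B \<le> ereal L \<longleftrightarrow>
      (\<forall>s t. (s, t) \<noteq> (0, 0) \<longrightarrow> G s t / (A * s\<^sup>2 + B * t\<^sup>2) \<le> L)"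
    unfolding quadratic_quotient_sup_def by (simp add: SUP_le_iff Ball_def split_paired_All)
  with pointwise show ?thesis by blast
qed

lemma quadratic_quotient_sup_pos:
  assumes "A > 0" "B > 0" "(s, t) \<noteq> (0, 0)" "G s t > 0"
  shows "quadratic_quotient_sup G A B > 0"
proof -
  have "0 < ereal (G s t / (A * s\<^sup>2 + B * t\<^sup>2))"
    using assms quadratic_form_pos by simp
  also have "\<dots> \<le> quadratic_quotient_sup G A B"
    by (rule quadratic_quotient_sup_upper[OF assms(3)])
  finally show ?thesis .
qed

lemma linear_growth_bound:
  fixes G :: "real \<times> real \<Rightarrow> real"
  assumes cont: "continuous_on UNIV G"
    and at_0: "((\<lambda>p. G p / (\<bar>fst p\<bar> + \<bar>snd p\<bar>)) \<longlongrightarrow> 0) (at (0, 0))"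
    and at_infinity: "((\<lambda>p. G p / (\<bar>fst p\<bar> + \<bar>snd p\<bar>)) \<longlongrightarrow> 0)
           (filtercomap (\<lambda>p. \<bar>fst p\<bar> + \<bar>snd p\<bar>) at_top)"
  obtains K where "K \<ge> 0" "\<And>p. p \<noteq> (0, 0) \<Longrightarrow> \<bar>G p\<bar> \<le> K * (\<bar>fst p\<bar> + \<bar>snd p\<bar>)"
proof -
  define n where "n p = \<bar>fst p\<bar> + \<bar>snd p\<bar>" for p :: "real \<times> real"
  have norm_le_n: "norm p \<le> n p" for p
    unfolding n_def by (cases p) (simp add: norm_Pair sqrt_sum_squares_le_sum_abs)
  have "eventually (\<lambda>p. dist (G p / n p) 0 < 1) (at (0, 0))"
    using tendstoD[OF at_0, of 1] unfolding n_def by simp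
  then obtain d where d: "d > 0" "\<And>p. p \<noteq> (0, 0) \<Longrightarrow> norm p < d \<Longrightarrow> \<bar>G p / n p\<bar> < 1"
    unfolding eventually_at by (auto simp: dist_norm zero_prod_def[symmetric])
  have "eventually (\<lambda>p. dist (G p / n p) 0 < 1) (filtercomap n at_top)"
    using tendstoD[OF at_infinity, of 1] unfolding n_def by simp
  then obtain R where R: "\<And>p. n p \<ge> R \<Longrightarrow> \<bar>G p / n p\<bar> < 1"
    unfolding eventually_filtercomap_at_top_linorder by auto
  obtain B where B: "B \<ge> 0" "\<And>p. p \<in> cball 0 R \<Longrightarrow> norm (G p) \<le> B"
    using continuous_on_compact_bound[OF compact_cball continuous_on_subset[OF cont]] by blast
  define K where "K = max 1 (B / d)"
  have "\<bar>G p\<bar> \<le> K * n p" if p: "p \<noteq> (0, 0)" for p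
  proof -
    have n_pos: "n p > 0"
    proof -
      have "norm p > 0" using p by (simp add: zero_prod_def[symmetric])
      then show ?thesis using norm_le_n[of p] by linarith
    qed
    have "\<bar>G p\<bar> / n p \<le> K"
    proof (cases "norm p < d \<or> n p \<ge> R")
      case True
      then have "\<bar>G p / n p\<bar> < 1" using d(2)[OF p] R by blast
      then have "\<bar>G p\<bar> / n p \<le> 1" using n_pos by (simp add: abs_divide)
      then show ?thesis unfolding K_def by simp
    next
      case far: False
      then have "\<bar>G p\<bar> \<le> B" using B(2) norm_le_n[of p] by simp
      then have "\<bar>G p\<bar> / n p \<le> B / d"
        using far norm_le_n[of p] d(1) by (intro frac_le) auto
      then show ?thesis unfolding K_def by simp
    qed
    then show ?thesis using n_pos by (simp add: pos_divide_le_eq)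
  qed
  then show ?thesis by (intro that[of K]) (simp_all add: K_def n_def)
qed

lemma abs_mult_add_le_sum_squares:
  fixes s t x y K :: real
  assumes "\<bar>x\<bar> \<le> K * (\<bar>s\<bar> + \<bar>t\<bar>)" "\<bar>y\<bar> \<le> K * (\<bar>s\<bar> + \<bar>t\<bar>)" "K \<ge> 0"
  shows "\<bar>s * x + t * y\<bar> \<le> 2 * K * (s\<^sup>2 + t\<^sup>2)"
proof -
  have "\<bar>s * x + t * y\<bar> \<le> \<bar>s\<bar> * \<bar>x\<bar> + \<bar>t\<bar> * \<bar>y\<bar>"
    by (metis abs_mult abs_triangle_ineq)
  also have "\<dots> \<le> \<bar>s\<bar> * (K * (\<bar>s\<bar> + \<bar>t\<bar>)) + \<bar>t\<bar> * (K * (\<bar>s\<bar> + \<bar>t\<bar>))"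
    using assms by (intro add_mono mult_left_mono) simp_all
  also have "\<dots> = K * (\<bar>s\<bar> + \<bar>t\<bar>)\<^sup>2"
    by (simp add: power2_eq_square algebra_simps)
  also have "\<dots> \<le> K * (2 * (s\<^sup>2 + t\<^sup>2))"
  proof (rule mult_left_mono)
    have "0 \<le> (\<bar>s\<bar> - \<bar>t\<bar>)\<^sup>2" by simp
    then show "(\<bar>s\<bar> + \<bar>t\<bar>)\<^sup>2 \<le> 2 * (s\<^sup>2 + t\<^sup>2)" by (simp add: power2_eq_square algebra_simps)
  qed (fact assms)
  finally show ?thesis by (simp add: algebra_simps)
qed

lemma sum_squares_le_quadratic_form:
  fixes A B s t :: real
  assumes "A > 0" "B > 0"
  shows "s\<^sup>2 + t\<^sup>2 \<le> max (inverse A) (inverse B) * (A * s\<^sup>2 + B * t\<^sup>2)"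
proof -
  have "s\<^sup>2 + t\<^sup>2 = inverse A * (A * s\<^sup>2) + inverse B * (B * t\<^sup>2)"
    using assms by (simp add: field_simps)
  also have "\<dots> \<le> max (inverse A) (inverse B) * (A * s\<^sup>2) + max (inverse A) (inverse B) * (B * t\<^sup>2)"
    using assms by (intro add_mono mult_right_mono) simp_all
  finally show ?thesis by (simp add: distrib_left)
qed

lemma Euler_quotient_sup_finite:
  fixes Fs Ft :: "real \<Rightarrow> real \<Rightarrow> real"
  assumes "continuous_on UNIV (\<lambda>p. Fs (fst p) (snd p))"
    and "continuous_on UNIV (\<lambda>p. Ft (fst p) (snd p))"
    and "((\<lambda>p. Fs (fst p) (snd p) / (\<bar>fst p\<bar> + \<bar>snd p\<bar>)) \<longlongrightarrow> 0) (at (0, 0))"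
    and "((\<lambda>p. Ft (fst p) (snd p) / (\<bar>fst p\<bar> + \<bar>snd p\<bar>)) \<longlongrightarrow> 0) (at (0, 0))"
    and "((\<lambda>p. Fs (fst p) (snd p) / (\<bar>fst p\<bar> + \<bar>snd p\<bar>)) \<longlongrightarrow> 0)
           (filtercomap (\<lambda>p. \<bar>fst p\<bar> + \<bar>snd p\<bar>) at_top)"
    and "((\<lambda>p. Ft (fst p) (snd p) / (\<bar>fst p\<bar> + \<bar>snd p\<bar>)) \<longlongrightarrow> 0)
           (filtercomap (\<lambda>p. \<bar>fst p\<bar> + \<bar>snd p\<bar>) at_top)"
    and "A > 0" "B > 0"
  shows "quadratic_quotient_sup (\<lambda>s t. \<bar>s * Fs s t + t * Ft s t\<bar>) A B < \<infinity>"
proof -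
  obtain K1 where K1: "K1 \<ge> 0"
    "\<And>p. p \<noteq> (0, 0) \<Longrightarrow> \<bar>Fs (fst p) (snd p)\<bar> \<le> K1 * (\<bar>fst p\<bar> + \<bar>snd p\<bar>)"
    using linear_growth_bound[OF assms(1,3,5)] by blast
  obtain K2 where K2: "K2 \<ge> 0"
    "\<And>p. p \<noteq> (0, 0) \<Longrightarrow> \<bar>Ft (fst p) (snd p)\<bar> \<le> K2 * (\<bar>fst p\<bar> + \<bar>snd p\<bar>)"
    using linear_growth_bound[OF assms(2,4,6)] by blast
  define K where "K = max K1 K2"
  have "\<bar>s * Fs s t + t * Ft s t\<bar> \<le> 2 * K * max (inverse A) (inverse B) * (A * s\<^sup>2 + B * t\<^sup>2)"
    if "(s, t) \<noteq> (0, 0)" for s t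
  proof -
    have "\<bar>s * Fs s t + t * Ft s t\<bar> \<le> 2 * K * (s\<^sup>2 + t\<^sup>2)"
    proof (rule abs_mult_add_le_sum_squares)
      show "\<bar>Fs s t\<bar> \<le> K * (\<bar>s\<bar> + \<bar>t\<bar>)"
        using K1(2)[OF that, simplified] unfolding K_def by (rule order_trans) (simp add: mult_right_mono)
      show "\<bar>Ft s t\<bar> \<le> K * (\<bar>s\<bar> + \<bar>t\<bar>)"
        using K2(2)[OF that, simplified] unfolding K_def by (rule order_trans) (simp add: mult_right_mono)
    qed (use K1(1) in \<open>simp add: K_def\<close>)
    also have "\<dots> \<le> 2 * K * (max (inverse A) (inverse B) * (A * s\<^sup>2 + B * t\<^sup>2))"
      using K1(1) sum_squares_le_quadratic_form[OF assms(7,8)] unfolding K_def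
      by (intro mult_left_mono) simp_all
    finally show ?thesis by (simp add: mult.assoc)
  qed
  then have "quadratic_quotient_sup (\<lambda>s t. \<bar>s * Fs s t + t * Ft s t\<bar>) A B
      \<le> ereal (2 * K * max (inverse A) (inverse B))"
    using quadratic_quotient_sup_le_iff[OF assms(7,8)] by blast
  then show ?thesis by (rule le_less_trans) simp
qed

lemma le_half_quadratic_form_if_Euler_le:
  fixes F Fs Ft :: "real \<Rightarrow> real \<Rightarrow> real"
  assumes F_deriv: "\<And>s t. ((\<lambda>p. F (fst p) (snd p)) has_derivative
                    (\<lambda>h. Fs s t * fst h + Ft s t * snd h)) (at (s, t))"
    and F_0: "F 0 0 = 0"
    and Euler_le: "\<And>s t. (s, t) \<noteq> (0, 0) \<Longrightarrow> s * Fs s t + t * Ft s t \<le> L * (A * s\<^sup>2 + B * t\<^sup>2)"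
  shows "F s t \<le> L * (A * s\<^sup>2 + B * t\<^sup>2) / 2"
proof (cases "(s, t) = (0, 0)")
  case True
  then show ?thesis using F_0 by simp
next
  case nonzero: False
  define q where "q = A * s\<^sup>2 + B * t\<^sup>2"
  define h where "h r = F (r * s) (r * t) - L * r\<^sup>2 * q / 2" for r
  have F_ray_deriv: "((\<lambda>r. F (r * s) (r * t)) has_real_derivative
      Fs (r * s) (r * t) * s + Ft (r * s) (r * t) * t) (at r)" for r
  proof -
    have "((\<lambda>r. (r * s, r * t)) has_derivative (\<lambda>h. (h * s, h * t))) (at r)"
      by (auto intro!: derivative_eq_intros)
    from diff_chain_at[OF this F_deriv]
    show ?thesis unfolding has_field_derivative_def o_def fst_conv snd_conv
      by (rule has_derivative_eq_rhs) (simp add: fun_eq_iff algebra_simps)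
  qed
  have h_deriv: "(h has_real_derivative
      Fs (r * s) (r * t) * s + Ft (r * s) (r * t) * t - L * r * q) (at r)" for r
    unfolding h_def by (auto intro!: derivative_eq_intros F_ray_deriv simp: power2_eq_square)
  have "h 1 \<le> h 0"
  proof (rule DERIV_nonpos_imp_decreasing_open[of 0 1 h])
    show "continuous_on {0..1} h" by (rule has_real_derivative_imp_continuous_on) (rule h_deriv)
    fix r :: real assume r: "0 < r" "r < 1"
    have "(r * s, r * t) \<noteq> (0, 0)" using nonzero r by auto
    from Euler_le[OF this]
    have "r * (Fs (r * s) (r * t) * s + Ft (r * s) (r * t) * t) \<le> r * (L * r * q)"
      unfolding q_def by (simp add: power2_eq_square algebra_simps)
    then have "Fs (r * s) (r * t) * s + Ft (r * s) (r * t) * t - L * r * q \<le> 0"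
      using r(1) by simp
    then show "\<exists>y. (h has_real_derivative y) (at r) \<and> y \<le> 0" using h_deriv by blast
  qed simp
  then show ?thesis unfolding h_def q_def using F_0 by simp
qed

lemma quadratic_quotient_sup_le_Euler_quotient_sup:
  fixes F Fs Ft :: "real \<Rightarrow> real \<Rightarrow> real" and A B C A' B' :: real
  assumes F_deriv: "\<And>s t. ((\<lambda>p. F (fst p) (snd p)) has_derivative
                    (\<lambda>h. Fs s t * fst h + Ft s t * snd h)) (at (s, t))"
    and F_0: "F 0 0 = 0"
    and "C > 0" "A' > 0" "B' > 0" "C * A' \<le> A" "C * B' \<le> B"
    and Euler_finite: "quadratic_quotient_sup (\<lambda>s t. \<bar>s * Fs s t + t * Ft s t\<bar>) A' B' < \<infinity>"
  shows "2 * ereal C * quadratic_quotient_sup F A B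
    \<le> quadratic_quotient_sup (\<lambda>s t. \<bar>s * Fs s t + t * Ft s t\<bar>) A' B'"
proof -
  let ?E = "quadratic_quotient_sup (\<lambda>s t. \<bar>s * Fs s t + t * Ft s t\<bar>) A' B'"
  have "0 < C * A'" "0 < C * B'" using assms(3-5) by simp_all
  with assms(6,7) have A: "A > 0" and B: "B > 0" by linarith+
  have "0 \<le> ereal (\<bar>1 * Fs 1 0 + 0 * Ft 1 0\<bar> / (A' * 1\<^sup>2 + B' * 0\<^sup>2))"
    using assms(4) by simp
  also have "\<dots> \<le> ?E" by (rule quadratic_quotient_sup_upper) simp
  finally obtain L where L: "?E = ereal L" "L \<ge> 0"
    using Euler_finite by (cases ?E) auto
  have Euler_abs_le: "\<forall>s t. (s, t) \<noteq> (0, 0) \<longrightarrow>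
      \<bar>s * Fs s t + t * Ft s t\<bar> \<le> L * (A' * s\<^sup>2 + B' * t\<^sup>2)"
    using quadratic_quotient_sup_le_iff[OF assms(4,5), of "\<lambda>s t. \<bar>s * Fs s t + t * Ft s t\<bar>" L] L(1)
    by simp
  have "s * Fs s t + t * Ft s t \<le> L * (A' * s\<^sup>2 + B' * t\<^sup>2)" if "(s, t) \<noteq> (0, 0)" for s t
    using Euler_abs_le[rule_format, OF that] by (rule abs_le_D1)
  then have F_le: "F s t \<le> L * (A' * s\<^sup>2 + B' * t\<^sup>2) / 2" for s t
    by (rule le_half_quadratic_form_if_Euler_le[OF F_deriv F_0])
  have "F s t \<le> L / (2 * C) * (A * s\<^sup>2 + B * t\<^sup>2)" for s t
  proof -
    have scaled: "C * (A' * s\<^sup>2 + B' * t\<^sup>2) \<le> A * s\<^sup>2 + B * t\<^sup>2"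
      using assms(6,7) by (simp add: distrib_left mult.assoc[symmetric] add_mono mult_right_mono)
    have "F s t \<le> L * (A' * s\<^sup>2 + B' * t\<^sup>2) / 2" by (rule F_le)
    also have "\<dots> = L * (C * (A' * s\<^sup>2 + B' * t\<^sup>2)) / (2 * C)" using \<open>C > 0\<close> by simp
    also have "\<dots> \<le> L * (A * s\<^sup>2 + B * t\<^sup>2) / (2 * C)"
      using scaled L(2) \<open>C > 0\<close> by (intro divide_right_mono mult_left_mono) simp_all
    finally show ?thesis by simp
  qed
  then have "quadratic_quotient_sup F A B \<le> ereal (L / (2 * C))"
    using quadratic_quotient_sup_le_iff[OF A B] by blast
  then have "2 * ereal C * quadratic_quotient_sup F A B \<le> 2 * ereal C * ereal (L / (2 * C))"
    by (rule ereal_mult_left_mono) (use \<open>C > 0\<close> in simp)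
  also have "\<dots> = ?E" using L(1) \<open>C > 0\<close> by simp
  finally show ?thesis .
qed

theorem proposition2p2:
  fixes \<Omega> :: "'a::euclidean_space set"
    and a b c :: "'a \<Rightarrow> real"
    and F Fs Ft :: "real \<Rightarrow> real \<Rightarrow> real"
  assumes "open \<Omega>" and "bounded \<Omega>" and "\<Omega> \<noteq> {}"
    and "in_Linf \<Omega> a" and "in_Linf \<Omega> b" and "in_Linf \<Omega> c"
    and "essinf_on \<Omega> a > 0" and "essinf_on \<Omega> b > 0" and "essinf_on \<Omega> c > 0"
    and F_deriv: "\<And>s t. ((\<lambda>p. F (fst p) (snd p)) has_derivative
                    (\<lambda>h. Fs s t * fst h + Ft s t * snd h)) (at (s, t))"
    and "continuous_on UNIV (\<lambda>p. Fs (fst p) (snd p))"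
    and "continuous_on UNIV (\<lambda>p. Ft (fst p) (snd p))"
    and F_nonneg: "\<And>s t. F s t \<ge> 0" and "F 0 0 = 0" and "\<exists>s t. F s t \<noteq> 0"
    and "((\<lambda>p. Fs (fst p) (snd p) / (\<bar>fst p\<bar> + \<bar>snd p\<bar>)) \<longlongrightarrow> 0) (at (0, 0))"
    and "((\<lambda>p. Ft (fst p) (snd p) / (\<bar>fst p\<bar> + \<bar>snd p\<bar>)) \<longlongrightarrow> 0) (at (0, 0))"
    and "((\<lambda>p. Fs (fst p) (snd p) / (\<bar>fst p\<bar> + \<bar>snd p\<bar>)) \<longlongrightarrow> 0)
           (filtercomap (\<lambda>p. \<bar>fst p\<bar> + \<bar>snd p\<bar>) at_top)"
    and "((\<lambda>p. Ft (fst p) (snd p) / (\<bar>fst p\<bar> + \<bar>snd p\<bar>)) \<longlongrightarrow> 0)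
           (filtercomap (\<lambda>p. \<bar>fst p\<bar> + \<bar>snd p\<bar>) at_top)"
  shows "sF \<Omega> a b c F < \<infinity> \<and> sF \<Omega> a b c F > 0 \<and>
         SF \<Omega> a b c Fs Ft < \<infinity> \<and> SF \<Omega> a b c Fs Ft > 0 \<and>
         SF \<Omega> a b c Fs Ft \<ge> sF \<Omega> a b c F"
proof -
  have \<Omega>: "\<Omega> \<in> sets lebesgue" "0 < emeasure lebesgue \<Omega>" "emeasure lebesgue \<Omega> < \<infinity>"
    using assms(1) open_bounded_emeasure_lebesgue[OF assms(1-3)] by simp_all
  define A B C where "A = L1_norm \<Omega> a" and "B = L1_norm \<Omega> b" and "C = L1_norm \<Omega> c"
  define A' B' where "A' = inverse (Linf_norm \<Omega> (\<lambda>x. c x / a x))"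
    and "B' = inverse (Linf_norm \<Omega> (\<lambda>x. c x / b x))"
  have C: "C > 0" unfolding C_def using L1_norm_pos[OF \<Omega> assms(6,9)] .
  have A': "A' > 0" "C * A' \<le> A" and B': "B' > 0" "C * B' \<le> B"
    unfolding A_def B_def C_def A'_def B'_def
    using inverse_Linf_norm_divide[OF \<Omega> assms(6,4,9,7)] inverse_Linf_norm_divide[OF \<Omega> assms(6,5,9,8)]
    by simp_all
  have sF_eq: "sF \<Omega> a b c F = 2 * ereal C * quadratic_quotient_sup F A B"
    unfolding sF_def quadratic_quotient_sup_def A_def B_def C_def ..
  have SF_eq: "SF \<Omega> a b c Fs Ft = quadratic_quotient_sup (\<lambda>s t. \<bar>s * Fs s t + t * Ft s t\<bar>) A' B'"
    unfolding SF_def quadratic_quotient_sup_def A'_def B'_def ..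
  have SF_finite: "SF \<Omega> a b c Fs Ft < \<infinity>"
    unfolding SF_eq by (rule Euler_quotient_sup_finite[OF assms(11,12,16-19) A'(1) B'(1)])
  have sF_le_SF: "sF \<Omega> a b c F \<le> SF \<Omega> a b c Fs Ft"
    unfolding sF_eq SF_eq using SF_finite[unfolded SF_eq]
    by (rule quadratic_quotient_sup_le_Euler_quotient_sup[OF F_deriv assms(14) C A'(1) B'(1) A'(2) B'(2)])
  obtain s t where "F s t \<noteq> 0" using assms(15) by blast
  with assms(14) F_nonneg[of s t] have "(s, t) \<noteq> (0, 0)" "F s t > 0" by auto
  moreover have "A > 0" "B > 0"
    unfolding A_def B_def using L1_norm_pos[OF \<Omega> assms(4,7)] L1_norm_pos[OF \<Omega> assms(5,8)] .
  ultimately have "sF \<Omega> a b c F > 0"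
    unfolding sF_eq using quadratic_quotient_sup_pos C by (simp add: ereal_zero_less_0_iff)
  with sF_le_SF SF_finite show ?thesis by (auto intro: less_le_trans le_less_trans)
qed

end
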